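(* Consider a multiservice loss system with $K$ call types in which every call type uses the same bandwidth $b>0$ and has the same service rate $\mu>0$: type $j$ calls arrive as a Poisson process of rate $\lambda_j>0$, have exponential holding times of rate $\mu$, and blocking a type-$j$ call costs $\omega_j\ge0$. The link has capacity $C$ with $M=\lfloor C/b\rfloor\ge1$, and a call of any type is accepted iff the current total used capacity $b\sum_k q_k$ is at most $C-b$. Thus the admitted states are $\Omega=\{\bar q\in\mathbb{Z}_{\ge0}^K: |\bar q|\le M\}$, where $|\bar q|=\sum_{k=1}^K q_k$, and the set of accepted types in state $\bar q$ is $R_{\bar q}=\{1,\dots,K\}$ if $|\bar q|<M$ and $R_{\bar q}=\emptyset$ if $|\bar q|=M$. Let $\pi_{\bar q}=G^{-1}\prod_{j=1}^K\frac{(\lambda_j/\mu)^{q_j}}{q_j!}$ for $\bar q\in\Omega$ with $G$ the normalizing constant, let $r_{\bar q}=\sum_{j\notin R_{\bar q}}\omega_j\lambda_j$, $g=\sum_{\bar q\in\Omega}r_{\bar q}\pi_{\bar q}$, and $\rho=\sum_{k=1}^K\lambda_k/\mu$. Define for $\bar q\in\Omega$, with $q=|\bar q|$, $$v(\bar q)=\frac{g}{\mu\rho}\sum_{i=1}^{q}\sum_{m=0}^{q-i}\frac{(q-i)!}{(q-i-m)!}\rho^{-m}.$$ Then $v$ satisfies Howard's equation: for every $\bar q\in\Omega$, $$\sum_{j\in R_{\bar q}}\lambda_j\big(v(\bar q+e_j)-v(\bar q)\big)-\sum_{j=1}^K\mu q_j\big(v(\bar q)-v(\bar q-e_j)\big)=g-r_{\bar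 q},$$ where $e_j$ is the $j$-th unit vector and terms with $q_j=0$ in the second sum are $0$. *)

theory Defs
  imports Complex_Main
begin

text \<open>Call types are indexed by 1..K; a state is a function q :: nat => nat
  vanishing outside 1..K (q j = number of type-j calls in progress).\<close>

definition qsize :: "nat \<Rightarrow> (nat \<Rightarrow> nat) \<Rightarrow> nat" where
  "qsize K q = (\<Sum>k=1..K. q k)"

definition Omega :: "nat \<Rightarrow> nat \<Rightarrow> (nat \<Rightarrow> nat) set" where
  "Omega K M = {q. (\<forall>j. j \<notin> {1..K} \<longrightarrow> q j = 0) \<and> qsize K q \<le> M}"

definition accepted :: "nat \<Rightarrow> nat \<Rightarrow> (nat \<Rightarrow> nat) \<Rightarrow> nat set" where
  "accepted K M q = (if qsize K q < M then {1..K} else {})"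

definition unnorm_weight :: "nat \<Rightarrow> (nat \<Rightarrow> real) \<Rightarrow> real \<Rightarrow> (nat \<Rightarrow> nat) \<Rightarrow> real" where
  "unnorm_weight K lam mu q = (\<Prod>j=1..K. (lam j / mu) ^ q j / fact (q j))"

definition normG :: "nat \<Rightarrow> nat \<Rightarrow> (nat \<Rightarrow> real) \<Rightarrow> real \<Rightarrow> real" where
  "normG K M lam mu = (\<Sum>q\<in>Omega K M. unnorm_weight K lam mu q)"

definition stat_dist :: "nat \<Rightarrow> nat \<Rightarrow> (nat \<Rightarrow> real) \<Rightarrow> real \<Rightarrow> (nat \<Rightarrow> nat) \<Rightarrow> real" where
  "stat_dist K M lam mu q = unnorm_weight K lam mu q / normG K M lam mu"

definition cost_rate :: "nat \<Rightarrow> nat \<Rightarrow> (nat \<Rightarrow> real) \<Rightarrow> (nat \<Rightarrow> real) \<Rightarrow> (nat \<Rightarrow> nat) \<Rightarrow> real" where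
  "cost_rate K M lam om q = (\<Sum>j\<in>{1..K} - accepted K M q. om j * lam j)"

definition gain :: "nat \<Rightarrow> nat \<Rightarrow> (nat \<Rightarrow> real) \<Rightarrow> (nat \<Rightarrow> real) \<Rightarrow> real \<Rightarrow> real" where
  "gain K M lam om mu = (\<Sum>q\<in>Omega K M. cost_rate K M lam om q * stat_dist K M lam mu q)"

definition load :: "nat \<Rightarrow> (nat \<Rightarrow> real) \<Rightarrow> real \<Rightarrow> real" where
  "load K lam mu = (\<Sum>k=1..K. lam k / mu)"

definition relval :: "nat \<Rightarrow> nat \<Rightarrow> (nat \<Rightarrow> real) \<Rightarrow> (nat \<Rightarrow> real) \<Rightarrow> real \<Rightarrow> (nat \<Rightarrow> nat) \<Rightarrow> real" where
  "relval K M lam om mu q =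
     (let n = qsize K q; \<rho> = load K lam mu in
      gain K M lam om mu / (mu * \<rho>) *
      (\<Sum>i=1..n. \<Sum>m=0..n-i. fact (n-i) / fact (n-i-m) * inverse (\<rho> ^ m)))"

end

theory Submission
  imports Defs
begin

(* The relative value v depends on a state only through its size n, and its increments are
   c A(n) with c = g / (mu rho) and A(n) = sum_{m<=n} n!/(n-m)! rho^-m. Since
   A(n) = 1 + (n/rho) A(n-1), Howard's equation at a state of size n < M reduces to
   g A(n) - g (n/rho) A(n-1) = g. At size M it reduces to g A(M) = W, the total blocking cost
   rate. By the multinomial theorem the size of a state is distributed as a Poisson law with
   parameter rho truncated to {0..M}, so g is W times the Erlang B probability
   (rho^M/M!) / sum_{k<=M} rho^k/k!, and this probability is exactly 1 / A(M). *)

definition states_of_size :: "nat \<Rightarrow> nat \<Rightarrow> (nat \<Rightarrow> nat) set" where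
  "states_of_size K n = {q. (\<forall>j. j \<notin> {1..K} \<longrightarrow> q j = 0) \<and> qsize K q = n}"

lemma qsize_Suc: "qsize (Suc K) q = qsize K q + q (Suc K)"
  by (simp add: qsize_def)

lemma qsize_fun_upd_outside: "j \<notin> {1..K} \<Longrightarrow> qsize K (q(j := x)) = qsize K q"
  unfolding qsize_def by (intro sum.cong) auto

lemma qsize_fun_upd:
  assumes "j \<in> {1..K}"
  shows "qsize K (q(j := x)) + q j = qsize K q + x"
proof -
  have "qsize K (q(j := x)) = x + (\<Sum>k\<in>{1..K} - {j}. q k)"
    unfolding qsize_def using assms by (subst sum.remove[of _ j]) (auto intro!: sum.cong)
  moreover have "qsize K q = q j + (\<Sum>k\<in>{1..K} - {j}. q k)"
    unfolding qsize_def using assms by (subst sum.remove[of _ j]) auto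
  ultimately show ?thesis by simp
qed

lemma component_le_qsize: "j \<in> {1..K} \<Longrightarrow> q j \<le> qsize K q"
  unfolding qsize_def by (rule member_le_sum) auto

lemma finite_states_of_size: "finite (states_of_size K n)"
proof (rule finite_subset)
  show "states_of_size K n \<subseteq> {q. \<forall>j. (j \<in> {1..K} \<longrightarrow> q j \<in> {0..n}) \<and> (j \<notin> {1..K} \<longrightarrow> q j = 0)}"
    unfolding states_of_size_def using component_le_qsize by fastforce
  show "finite {q. \<forall>j. (j \<in> {1..K} \<longrightarrow> q j \<in> {0..n}) \<and> (j \<notin> {1..K} \<longrightarrow> q j = (0::nat))}"
    by (rule finite_set_of_finite_funs) auto
qed

lemma states_of_size_Suc_slice:
  assumes "k \<le> n"
  shows "{q \<in> states_of_size (Suc K) n. q (Suc K) = k}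
       = (\<lambda>q. q(Suc K := k)) ` states_of_size K (n - k)"
proof (intro equalityI subsetI)
  fix q assume "q \<in> {q \<in> states_of_size (Suc K) n. q (Suc K) = k}"
  then have q: "q \<in> states_of_size (Suc K) n" "q (Suc K) = k" by auto
  then have "q(Suc K := 0) \<in> states_of_size K (n - k)"
    using qsize_fun_upd_outside[of "Suc K" K q 0]
    by (auto simp: states_of_size_def qsize_Suc)
  moreover have "q = (q(Suc K := 0))(Suc K := k)" using q by auto
  ultimately show "q \<in> (\<lambda>q. q(Suc K := k)) ` states_of_size K (n - k)" by blast
next
  fix p assume "p \<in> (\<lambda>q. q(Suc K := k)) ` states_of_size K (n - k)"
  then obtain q where "q \<in> states_of_size K (n - k)" and "p = q(Suc K := k)" by blast
  then show "p \<in> {q \<in> states_of_size (Suc K) n. q (Suc K) = k}"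
    using assms qsize_fun_upd_outside[of "Suc K" K q k]
    by (auto simp: states_of_size_def qsize_Suc)
qed

lemma inj_on_fun_upd_states_of_size: "inj_on (\<lambda>q. q(Suc K := k)) (states_of_size K m)"
proof (rule inj_onI)
  fix p q
  assume "p \<in> states_of_size K m" "q \<in> states_of_size K m"
    and eq: "p(Suc K := k) = q(Suc K := k)"
  then have "p (Suc K) = 0" "q (Suc K) = 0" by (auto simp: states_of_size_def)
  then show "p = q" by (metis eq fun_upd_triv fun_upd_upd)
qed

lemma sum_fact_binomial:
  fixes a b :: "'a::field_char_0"
  shows "(\<Sum>k\<le>n. a ^ k / fact k * (b ^ (n - k) / fact (n - k))) = (a + b) ^ n / fact n"
proof -
  have "(a + b) ^ n / fact n = (\<Sum>k\<le>n. of_nat (n choose k) * a ^ k * b ^ (n - k) / fact n)"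
    by (simp add: binomial_ring sum_divide_distrib)
  also have "\<dots> = (\<Sum>k\<le>n. a ^ k / fact k * (b ^ (n - k) / fact (n - k)))"
    by (intro sum.cong) (auto simp: binomial_fact field_simps)
  finally show ?thesis by simp
qed

lemma multinomial_theorem:
  fixes x :: "nat \<Rightarrow> 'a::field_char_0"
  shows "(\<Sum>q\<in>states_of_size K n. \<Prod>j=1..K. x j ^ q j / fact (q j)) = (\<Sum>j=1..K. x j) ^ n / fact n"
proof (induction K arbitrary: n)
  case 0
  have "states_of_size 0 n = (if n = 0 then {\<lambda>_. 0} else {})"
    by (auto simp: states_of_size_def qsize_def)
  then show ?case by simp
next
  case (Suc K)
  let ?w = "\<lambda>K q. \<Prod>j=1..K. x j ^ q j / fact (q j)"
  have "(\<Sum>q\<in>states_of_size (Suc K) n. ?w (Suc K) q)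
      = (\<Sum>k\<le>n. \<Sum>q\<in>{q \<in> states_of_size (Suc K) n. q (Suc K) = k}. ?w (Suc K) q)"
    using component_le_qsize[of "Suc K" "Suc K"]
    by (intro sum.group[symmetric] finite_states_of_size) (auto simp: states_of_size_def)
  also have "\<dots> = (\<Sum>k\<le>n. \<Sum>q\<in>states_of_size K (n - k). ?w (Suc K) (q(Suc K := k)))"
  proof (rule sum.cong[OF refl])
    fix k assume "k \<in> {..n}"
    then show "(\<Sum>q\<in>{q \<in> states_of_size (Suc K) n. q (Suc K) = k}. ?w (Suc K) q)
             = (\<Sum>q\<in>states_of_size K (n - k). ?w (Suc K) (q(Suc K := k)))"
      by (simp add: states_of_size_Suc_slice sum.reindex inj_on_fun_upd_states_of_size)
  qed
  also have "\<dots> = (\<Sum>k\<le>n. x (Suc K) ^ k / fact k * (\<Sum>q\<in>states_of_size K (n - k). ?w K q))"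
  proof -
    have "?w K (q(Suc K := k)) = ?w K q" for q k by (intro prod.cong) auto
    then show ?thesis by (simp add: sum_distrib_left mult.commute)
  qed
  also have "\<dots> = (x (Suc K) + (\<Sum>j=1..K. x j)) ^ n / fact n"
    by (simp only: Suc.IH sum_fact_binomial)
  finally show ?case by (simp add: add.commute)
qed

lemma sum_Omega_by_size:
  "(\<Sum>q\<in>Omega K M. f q) = (\<Sum>n\<le>M. \<Sum>q\<in>states_of_size K n. f q)"
proof -
  have "Omega K M = (\<Union>n\<le>M. states_of_size K n)"
    by (auto simp: Omega_def states_of_size_def)
  then have "finite (Omega K M)" by (simp add: finite_states_of_size)
  then have "(\<Sum>q\<in>Omega K M. f q) = (\<Sum>n\<le>M. \<Sum>q\<in>{q \<in> Omega K M. qsize K q = n}. f q)"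
    by (intro sum.group[symmetric]) (auto simp: Omega_def)
  also have "\<dots> = (\<Sum>n\<le>M. \<Sum>q\<in>states_of_size K n. f q)"
    by (intro sum.cong refl) (auto simp: Omega_def states_of_size_def)
  finally show ?thesis .
qed

lemma sum_unnorm_weight_states_of_size:
  "(\<Sum>q\<in>states_of_size K n. unnorm_weight K lam mu q) = load K lam mu ^ n / fact n"
  unfolding unnorm_weight_def load_def by (rule multinomial_theorem)

lemma normG_eq: "normG K M lam mu = (\<Sum>n\<le>M. load K lam mu ^ n / fact n)"
  unfolding normG_def sum_Omega_by_size sum_unnorm_weight_states_of_size ..

lemma cost_rate_eq:
  "cost_rate K M lam om q = (if qsize K q < M then 0 else \<Sum>j=1..K. om j * lam j)"
  unfolding cost_rate_def accepted_def by simp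

lemma gain_eq:
  "gain K M lam om mu
     = (\<Sum>j=1..K. om j * lam j) * (load K lam mu ^ M / fact M) / normG K M lam mu"
proof -
  have "gain K M lam om mu = (\<Sum>n\<le>M. (if n < M then 0 else \<Sum>j=1..K. om j * lam j)
          / normG K M lam mu * (\<Sum>q\<in>states_of_size K n. unnorm_weight K lam mu q))"
    unfolding gain_def sum_Omega_by_size
    by (intro sum.cong refl)
       (auto simp: cost_rate_eq states_of_size_def stat_dist_def sum_distrib_left)
  then show ?thesis
    by (simp add: sum_unnorm_weight_states_of_size lessThan_Suc_atMost[symmetric])
qed

(* The reciprocal of the Erlang B blocking probability with offered load r and n servers,
   by erlang_inv_closed_form. *)
definition erlang_inv :: "'a::field_char_0 \<Rightarrow> nat \<Rightarrow> 'a" where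
  "erlang_inv r n = (\<Sum>m=0..n. fact n / fact (n - m) * inverse (r ^ m))"

lemma erlang_inv_0 [simp]: "erlang_inv r 0 = 1"
  by (simp add: erlang_inv_def)

lemma erlang_inv_Suc:
  assumes "r \<noteq> 0"
  shows "erlang_inv r (Suc n) = 1 + of_nat (Suc n) / r * erlang_inv r n"
proof -
  have "erlang_inv r (Suc n)
      = 1 + (\<Sum>m=0..n. fact (Suc n) / fact (Suc n - Suc m) * inverse (r ^ Suc m))"
    unfolding erlang_inv_def by (subst sum.atLeast0_atMost_Suc_shift) (simp del: fact_Suc)
  also have "\<dots> = 1 + (\<Sum>m=0..n. of_nat (Suc n) / r * (fact n / fact (n - m) * inverse (r ^ m)))"
    by (simp add: fact_Suc divide_inverse inverse_mult_distrib ac_simps del: of_nat_Suc)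
  finally show ?thesis
    by (simp add: erlang_inv_def sum_distrib_left)
qed

lemma erlang_inv_recurrence:
  assumes "r \<noteq> 0"
  shows "erlang_inv r n - of_nat n / r * erlang_inv r (n - 1) = 1"
  using erlang_inv_Suc[OF assms] by (cases n) simp_all

lemma erlang_inv_closed_form:
  assumes "r \<noteq> 0"
  shows "r ^ n / fact n * erlang_inv r n = (\<Sum>k\<le>n. r ^ k / fact k)"
proof -
  have "r ^ n / fact n * erlang_inv r n = (\<Sum>m\<le>n. r ^ (n - m) / fact (n - m))"
    unfolding erlang_inv_def atLeast0AtMost sum_distrib_left
    using assms by (intro sum.cong refl) (simp add: power_diff field_simps)
  also have "\<dots> = (\<Sum>k\<le>n. r ^ k / fact k)"
    using sum.atLeastAtMost_rev[of "\<lambda>k. r ^ k / fact k" 0 n] by (simp add: atLeast0AtMost)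
  finally show ?thesis .
qed

lemma relval_eq_sum_erlang_inv:
  "relval K M lam om mu q = gain K M lam om mu / (mu * load K lam mu)
     * (\<Sum>k<qsize K q. erlang_inv (load K lam mu) k)"
  unfolding relval_def Let_def erlang_inv_def[symmetric]
  by (simp add: sum.atLeast1_atMost_eq sum.nat_diff_reindex)

lemma relval_diff_qsize_Suc:
  assumes "qsize K p = Suc (qsize K p')"
  shows "relval K M lam om mu p - relval K M lam om mu p'
       = gain K M lam om mu / (mu * load K lam mu) * erlang_inv (load K lam mu) (qsize K p')"
  unfolding relval_eq_sum_erlang_inv assms by (simp add: algebra_simps)

lemma arrival_sum_eq:
  assumes "qsize K q < M" "mu \<noteq> 0" "load K lam mu \<noteq> 0"
  shows "(\<Sum>j\<in>accepted K M q. lam j *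
            (relval K M lam om mu (q(j := q j + 1)) - relval K M lam om mu q))
       = gain K M lam om mu * erlang_inv (load K lam mu) (qsize K q)"
proof -
  let ?c = "gain K M lam om mu / (mu * load K lam mu)"
  have "(\<Sum>j\<in>accepted K M q. lam j *
            (relval K M lam om mu (q(j := q j + 1)) - relval K M lam om mu q))
      = (\<Sum>j=1..K. lam j * (?c * erlang_inv (load K lam mu) (qsize K q)))"
  proof (rule sum.cong)
    fix j assume "j \<in> {1..K}"
    then have "qsize K (q(j := q j + 1)) = Suc (qsize K q)"
      using qsize_fun_upd[of j K q "q j + 1"] by simp
    then show "lam j * (relval K M lam om mu (q(j := q j + 1)) - relval K M lam om mu q)
             = lam j * (?c * erlang_inv (load K lam mu) (qsize K q))"
      by (simp add: relval_diff_qsize_Suc)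
  qed (simp add: accepted_def assms(1))
  also have "\<dots> = (\<Sum>j=1..K. lam j) * ?c * erlang_inv (load K lam mu) (qsize K q)"
    by (simp only: sum_distrib_right mult.assoc)
  also have "(\<Sum>j=1..K. lam j) = mu * load K lam mu"
    using assms(2) by (simp add: load_def sum_divide_distrib[symmetric])
  also have "mu * load K lam mu * ?c * erlang_inv (load K lam mu) (qsize K q)
      = gain K M lam om mu * erlang_inv (load K lam mu) (qsize K q)"
    using assms(2,3) by simp
  finally show ?thesis .
qed

lemma departure_sum_eq:
  assumes "mu \<noteq> 0"
  shows "(\<Sum>j=1..K. mu * real (q j) *
            (relval K M lam om mu q - relval K M lam om mu (q(j := q j - 1))))
       = gain K M lam om mu * (real (qsize K q) / load K lam mu)
           * erlang_inv (load K lam mu) (qsize K q - 1)"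
proof -
  let ?d = "gain K M lam om mu / (mu * load K lam mu) * erlang_inv (load K lam mu) (qsize K q - 1)"
  have "(\<Sum>j=1..K. mu * real (q j) *
            (relval K M lam om mu q - relval K M lam om mu (q(j := q j - 1))))
      = (\<Sum>j=1..K. mu * real (q j) * ?d)"
  proof (rule sum.cong[OF refl])
    fix j assume j: "j \<in> {1..K}"
    show "mu * real (q j) * (relval K M lam om mu q - relval K M lam om mu (q(j := q j - 1)))
        = mu * real (q j) * ?d"
    proof (cases "q j = 0")
      case False
      then have "qsize K q = Suc (qsize K (q(j := q j - 1)))"
        using qsize_fun_upd[OF j, of q "q j - 1"] by simp
      then show ?thesis by (simp add: relval_diff_qsize_Suc)
    qed simp
  qed
  also have "\<dots> = mu * real (qsize K q) * ?d"
    by (simp only: qsize_def of_nat_sum sum_distrib_left sum_distrib_right)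
  finally show ?thesis
    using assms by simp
qed

lemma gain_mult_erlang_inv:
  assumes "load K lam mu > 0"
  shows "gain K M lam om mu * erlang_inv (load K lam mu) M = (\<Sum>j=1..K. om j * lam j)"
proof -
  have "normG K M lam mu > 0"
    unfolding normG_eq using assms by (intro sum_pos) auto
  then show ?thesis
    using erlang_inv_closed_form[of "load K lam mu" M] assms
    by (simp add: gain_eq normG_eq field_simps)
qed

theorem mainTheorem4:
  fixes K M :: nat and b C mu :: real and lam om :: "nat \<Rightarrow> real"
  assumes "K \<ge> 1"
    and "b > 0" and "mu > 0"
    and "\<And>j. j \<in> {1..K} \<Longrightarrow> lam j > 0"
    and "\<And>j. j \<in> {1..K} \<Longrightarrow> om j \<ge> 0"
    and "M = nat \<lfloor>C / b\<rfloor>" and "M \<ge> 1"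
    and "q \<in> Omega K M"
  shows "(\<Sum>j\<in>accepted K M q. lam j *
            (relval K M lam om mu (q(j := q j + 1)) - relval K M lam om mu q))
         - (\<Sum>j=1..K. mu * real (q j) *
            (relval K M lam om mu q - relval K M lam om mu (q(j := q j - 1))))
         = gain K M lam om mu - cost_rate K M lam om q"
proof -
  define n where "n = qsize K q"
  define \<rho> where "\<rho> = load K lam mu"
  define g where "g = gain K M lam om mu"
  have "\<rho> > 0"
    unfolding \<rho>_def load_def using assms(1,3,4) by (intro sum_pos) auto
  have departures: "(\<Sum>j=1..K. mu * real (q j) *
            (relval K M lam om mu q - relval K M lam om mu (q(j := q j - 1))))
      = g * (real n / \<rho>) * erlang_inv \<rho> (n - 1)"
    unfolding n_def \<rho>_def g_def by (rule departure_sum_eq) (use assms(3) in simp)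
  have recurrence: "g * (real n / \<rho>) * erlang_inv \<rho> (n - 1) = g * erlang_inv \<rho> n - g"
    using erlang_inv_recurrence[of \<rho> n] \<open>\<rho> > 0\<close> by (simp add: algebra_simps)
  have "n \<le> M" using assms(8) by (simp add: Omega_def n_def)
  then consider "n < M" | "n = M" by linarith
  then show ?thesis
  proof cases
    case 1
    then show ?thesis
      using arrival_sum_eq[of K q M mu lam om] assms(3) \<open>\<rho> > 0\<close> departures recurrence
      by (simp add: cost_rate_eq n_def \<rho>_def g_def)
  next
    case 2
    then show ?thesis
      using gain_mult_erlang_inv[of K lam mu M om] \<open>\<rho> > 0\<close> departures recurrence
      by (simp add: accepted_def cost_rate_eq n_def \<rho>_def g_def)
  qed
qed

end
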